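(* For every integer $q\ge1$, $\sigma(q)\le e(q)$.
   Context: Standing setup: $b\ge2$ integer, $\mathcal{A}=\{0,\dots,b-1\}$, $\gamma\in(1/b,1)$, $\psi$ a $\mathbb{Z}$-periodic $C^1$ function. $S(x,\mathbf{i})=\sum_{n\ge1}\gamma^{n-1}\psi\big(\frac{x+i_1+i_2b+\cdots+i_nb^{n-1}}{b^n}\big)$ for $\mathbf{i}\in\mathcal{A}^{\mathbb{Z}^+}$, $S'=\partial_xS$. For $\mathbf{u}\in\mathcal{A}^q$, $x(\mathbf{u})=(x+u_1+u_2b+\cdots+u_qb^{q-1})/b^q$. Sequences $\mathbf{i},\mathbf{j}$ are $(\varepsilon,\delta)$-tangent at $x_0$ if $|S(x_0,\mathbf{i})-S(x_0,\mathbf{j})|\le\varepsilon$ and $|S'(x_0,\mathbf{i})-S'(x_0,\mathbf{j})|\le\delta$. $E(q,x_0;\varepsilon,\delta)$: pairs $(\mathbf{k},\mathbf{l})\in\mathcal{A}^q\times\mathcal{A}^q$ with some $\mathbf{u},\mathbf{v}\in\mathcal{A}^{\mathbb{Z}^+}$ such that the concatenations $\mathbf{ku},\mathbf{lv}$ are $(\varepsilon,\delta)$-tangent at $x_0$. For $J\subset\mathbb{R}$: $E(q,J;\varepsilon,\delta)=\bigcup_{x\in J}E(q,x;\varepsilon,\delta)$, $E(q,J)=\bigcap_{\varepsilon,\delta>0}E(q,J;\varepsilon,\delta)$, $e(q,J)=\max_{\mathbf{k}\in\mathcal{A}^q}\#\{\mathbf{l}:(\mathbf{k},\mathbf{l})\in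 E(q,J)\}$, and $e(q)=\lim_{p\to\infty}\max_{0\le k<b^p}e(q,[k/b^p,(k+1)/b^p])$. Weight function: measurable $\omega:[0,1)\to(0,\infty)$ with $\omega,1/\omega$ bounded. Admissible testing function of order $q$: measurable $V:[0,1)\times\mathcal{A}^q\times\mathcal{A}^q\to[0,\infty)$ such that for some $\varepsilon,\delta>0$, $V(x,\mathbf{u},\mathbf{v})V(x,\mathbf{v},\mathbf{u})\ge1$ whenever $(\mathbf{u},\mathbf{v})\in E(q,x;\varepsilon,\delta)$, $x\in[0,1)$. $\Sigma_{V,\omega}(x)=\sup_{\mathbf{u}}\frac{\omega(x)}{\omega(x(\mathbf{u}))}\sum_{\mathbf{v}}V(x,\mathbf{u},\mathbf{v})$; $\sigma(q)=\inf_{\omega,V}\|\Sigma_{V,\omega}\|_\infty$. *)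

theory Defs
  imports "HOL-Analysis.Analysis" "HOL-Probability.Essential_Supremum"
begin

text \<open>Infinite sequences over the alphabet {0..b-1}, 0-indexed: i 0 = i_1, i 1 = i_2, ...\<close>
definition seqs :: "nat \<Rightarrow> (nat \<Rightarrow> nat) set" where
  "seqs b = {i. \<forall>n. i n < b}"

definition words :: "nat \<Rightarrow> nat \<Rightarrow> nat list set" where
  "words b q = {k. length k = q \<and> (\<forall>a\<in>set k. a < b)}"

definition conc :: "nat list \<Rightarrow> (nat \<Rightarrow> nat) \<Rightarrow> (nat \<Rightarrow> nat)" where
  "conc k u = (\<lambda>n. if n < length k then k ! n else u (n - length k))"

text \<open>S(x,i) = sum_{n>=1} gamma^(n-1) psi((x + i_1 + i_2 b + ... + i_n b^(n-1)) / b^n)\<close>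
definition S :: "nat \<Rightarrow> real \<Rightarrow> (real \<Rightarrow> real) \<Rightarrow> real \<Rightarrow> (nat \<Rightarrow> nat) \<Rightarrow> real" where
  "S b \<gamma> \<psi> x i =
     (\<Sum>n. \<gamma> ^ n * \<psi> ((x + (\<Sum>m<Suc n. real (i m) * real b ^ m)) / real b ^ Suc n))"

definition Sd :: "nat \<Rightarrow> real \<Rightarrow> (real \<Rightarrow> real) \<Rightarrow> real \<Rightarrow> (nat \<Rightarrow> nat) \<Rightarrow> real" where
  "Sd b \<gamma> \<psi> x i = deriv (\<lambda>y. S b \<gamma> \<psi> y i) x"

definition xw :: "nat \<Rightarrow> real \<Rightarrow> nat list \<Rightarrow> real" where
  "xw b x u = (x + (\<Sum>m<length u. real (u ! m) * real b ^ m)) / real b ^ length u"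

definition tangent :: "nat \<Rightarrow> real \<Rightarrow> (real \<Rightarrow> real) \<Rightarrow> real \<Rightarrow> real \<Rightarrow> real
    \<Rightarrow> (nat \<Rightarrow> nat) \<Rightarrow> (nat \<Rightarrow> nat) \<Rightarrow> bool" where
  "tangent b \<gamma> \<psi> \<epsilon> \<delta> x0 i j \<longleftrightarrow>
     \<bar>S b \<gamma> \<psi> x0 i - S b \<gamma> \<psi> x0 j\<bar> \<le> \<epsilon> \<and> \<bar>Sd b \<gamma> \<psi> x0 i - Sd b \<gamma> \<psi> x0 j\<bar> \<le> \<delta>"

definition Etan :: "nat \<Rightarrow> real \<Rightarrow> (real \<Rightarrow> real) \<Rightarrow> nat \<Rightarrow> real \<Rightarrow> real \<Rightarrow> real
    \<Rightarrow> (nat list \<times> nat list) set" where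
  "Etan b \<gamma> \<psi> q x0 \<epsilon> \<delta> =
     {(k, l). k \<in> words b q \<and> l \<in> words b q \<and>
        (\<exists>u\<in>seqs b. \<exists>v\<in>seqs b. tangent b \<gamma> \<psi> \<epsilon> \<delta> x0 (conc k u) (conc l v))}"

definition EJ :: "nat \<Rightarrow> real \<Rightarrow> (real \<Rightarrow> real) \<Rightarrow> nat \<Rightarrow> real set
    \<Rightarrow> (nat list \<times> nat list) set" where
  "EJ b \<gamma> \<psi> q J = (\<Inter>\<epsilon>\<in>{0<..}. \<Inter>\<delta>\<in>{0<..}. \<Union>x\<in>J. Etan b \<gamma> \<psi> q x \<epsilon> \<delta>)"

definition eJ :: "nat \<Rightarrow> real \<Rightarrow> (real \<Rightarrow> real) \<Rightarrow> nat \<Rightarrow> real set \<Rightarrow> nat" where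
  "eJ b \<gamma> \<psi> q J = Max ((\<lambda>k. card {l. (k, l) \<in> EJ b \<gamma> \<psi> q J}) ` words b q)"

definition e_num :: "nat \<Rightarrow> real \<Rightarrow> (real \<Rightarrow> real) \<Rightarrow> nat \<Rightarrow> real" where
  "e_num b \<gamma> \<psi> q = lim (\<lambda>p. real (Max ((\<lambda>k. eJ b \<gamma> \<psi> q
       {real k / real b ^ p .. (real k + 1) / real b ^ p}) ` {..<b ^ p})))"

definition weight :: "(real \<Rightarrow> real) \<Rightarrow> bool" where
  "weight \<omega> \<longleftrightarrow> \<omega> \<in> borel_measurable (restrict_space lborel {0..<1}) \<and>
     (\<forall>x\<in>{0..<1}. 0 < \<omega> x) \<and>
     (\<exists>M. \<forall>x\<in>{0..<1}. \<omega> x \<le> M \<and> 1 / \<omega> x \<le> M)"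

definition admissible :: "nat \<Rightarrow> real \<Rightarrow> (real \<Rightarrow> real) \<Rightarrow> nat
    \<Rightarrow> (real \<Rightarrow> nat list \<Rightarrow> nat list \<Rightarrow> real) \<Rightarrow> bool" where
  "admissible b \<gamma> \<psi> q V \<longleftrightarrow>
     (\<forall>u\<in>words b q. \<forall>v\<in>words b q.
        (\<lambda>x. V x u v) \<in> borel_measurable (restrict_space lborel {0..<1})) \<and>
     (\<forall>x\<in>{0..<1}. \<forall>u\<in>words b q. \<forall>v\<in>words b q. 0 \<le> V x u v) \<and>
     (\<exists>\<epsilon>>0. \<exists>\<delta>>0. \<forall>x\<in>{0..<1}. \<forall>u v. (u, v) \<in> Etan b \<gamma> \<psi> q x \<epsilon> \<delta> \<longrightarrow>
        1 \<le> V x u v * V x v u)"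

definition SigmaVw :: "nat \<Rightarrow> nat \<Rightarrow> (real \<Rightarrow> nat list \<Rightarrow> nat list \<Rightarrow> real)
    \<Rightarrow> (real \<Rightarrow> real) \<Rightarrow> real \<Rightarrow> real" where
  "SigmaVw b q V \<omega> x =
     Max ((\<lambda>u. \<omega> x / \<omega> (xw b x u) * (\<Sum>v\<in>words b q. V x u v)) ` words b q)"

definition sigma :: "nat \<Rightarrow> real \<Rightarrow> (real \<Rightarrow> real) \<Rightarrow> nat \<Rightarrow> ereal" where
  "sigma b \<gamma> \<psi> q =
     (INF p \<in> {(\<omega>, V). weight \<omega> \<and> admissible b \<gamma> \<psi> q V}.
        esssup (restrict_space lborel {0..<1}) (\<lambda>x. ereal (SigmaVw b q (snd p) (fst p) x)))"

end

theory Submission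
  imports Defs
begin

text \<open>
  Fix a level p and test with the weight \<open>\<omega> = 1\<close> and the function V that, at a point x of the
  b-adic cell \<open>I = [k/b^p, (k+1)/b^p]\<close>, is the indicator of \<open>E(q, I)\<close>.  Since there are only
  finitely many cells and pairs of words, one \<open>\<epsilon> = \<delta> > 0\<close> works for all of them, so V is
  admissible, and \<open>\<Sigma>\<^sub>V\<^sub>,\<^sub>\<omega>\<close> on the cell I is at most \<open>e(q, I)\<close>.  Hence \<open>\<sigma>(q)\<close> is bounded by the
  maximum of \<open>e(q, I)\<close> over the cells of level p.  Cells of level p + 1 lie in cells of
  level p and \<open>e(q, J)\<close> is monotone in J, so these maxima decrease to \<open>e(q)\<close>.
\<close>

lemma finite_words: "finite (words b q)"
proof -
  have "words b q \<subseteq> {xs. set xs \<subseteq> {..<b} \<and> length xs = q}"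
    by (auto simp: words_def)
  moreover have "finite {xs. set xs \<subseteq> {..<b} \<and> length xs = q}"
    by (rule finite_lists_length_eq) simp
  ultimately show ?thesis by (rule finite_subset)
qed

lemma words_nonempty:
  assumes "b > 0"
  shows "words b q \<noteq> {}"
proof -
  have "replicate q 0 \<in> words b q"
    using assms by (simp add: words_def)
  then show ?thesis by blast
qed

lemma Etan_subset_words: "Etan b \<gamma> \<psi> q x \<epsilon> \<delta> \<subseteq> words b q \<times> words b q"
  unfolding Etan_def by auto

lemma Etan_sym: "(u, v) \<in> Etan b \<gamma> \<psi> q x \<epsilon> \<delta> \<Longrightarrow> (v, u) \<in> Etan b \<gamma> \<psi> q x \<epsilon> \<delta>"
  unfolding Etan_def tangent_def by (auto simp: abs_minus_commute)

lemma Etan_mono: "\<epsilon> \<le> \<epsilon>' \<Longrightarrow> \<delta> \<le> \<delta>' \<Longrightarrow> Etan b \<gamma> \<psi> q x \<epsilon> \<delta> \<subseteq> Etan b \<gamma> \<psi> q x \<epsilon>' \<delta>'"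
  unfolding Etan_def tangent_def by (fastforce intro: order_trans)

lemma EJ_subset_words: "EJ b \<gamma> \<psi> q J \<subseteq> words b q \<times> words b q"
proof
  fix t
  assume "t \<in> EJ b \<gamma> \<psi> q J"
  then have "t \<in> (\<Union>x\<in>J. Etan b \<gamma> \<psi> q x 1 1)"
    unfolding EJ_def by auto
  then show "t \<in> words b q \<times> words b q"
    using Etan_subset_words by blast
qed

lemma EJ_mono: "J \<subseteq> J' \<Longrightarrow> EJ b \<gamma> \<psi> q J \<subseteq> EJ b \<gamma> \<psi> q J'"
  unfolding EJ_def by blast

lemma eventually_Etan_imp_EJ:
  "\<forall>\<^sub>F \<eta> in at_right 0. \<forall>x\<in>J. (u, v) \<in> Etan b \<gamma> \<psi> q x \<eta> \<eta> \<longrightarrow> (u, v) \<in> EJ b \<gamma> \<psi> q J"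
proof (cases "(u, v) \<in> EJ b \<gamma> \<psi> q J")
  case False
  then obtain \<epsilon> \<delta> :: real where "\<epsilon> > 0" "\<delta> > 0" and off: "\<forall>x\<in>J. (u, v) \<notin> Etan b \<gamma> \<psi> q x \<epsilon> \<delta>"
    unfolding EJ_def by auto
  then have "\<forall>\<^sub>F \<eta> in at_right 0. \<eta> \<in> {0<..<min \<epsilon> \<delta>}"
    by (intro eventually_at_right_real) simp
  then show ?thesis
  proof eventually_elim
    case (elim \<eta>)
    then have "Etan b \<gamma> \<psi> q x \<eta> \<eta> \<subseteq> Etan b \<gamma> \<psi> q x \<epsilon> \<delta>" for x
      by (intro Etan_mono) auto
    with off show ?case by blast
  qed
qed simp

lemma uniform_Etan_imp_EJ:
  assumes "finite K"
  obtains \<eta> :: real where "\<eta> > 0"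
    and "\<And>k x u v. k \<in> K \<Longrightarrow> x \<in> J k \<Longrightarrow> (u, v) \<in> Etan b \<gamma> \<psi> q x \<eta> \<eta> \<Longrightarrow> (u, v) \<in> EJ b \<gamma> \<psi> q (J k)"
proof -
  have "\<forall>\<^sub>F \<eta> in at_right 0. \<forall>k\<in>K. \<forall>u\<in>words b q. \<forall>v\<in>words b q.
      \<forall>x\<in>J k. (u, v) \<in> Etan b \<gamma> \<psi> q x \<eta> \<eta> \<longrightarrow> (u, v) \<in> EJ b \<gamma> \<psi> q (J k)"
    by (simp only: eventually_ball_finite_distrib assms finite_words) (blast intro: eventually_Etan_imp_EJ)
  with eventually_at_right_less have "\<forall>\<^sub>F \<eta> in at_right 0. 0 < \<eta> \<and> (\<forall>k\<in>K. \<forall>u\<in>words b q.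
      \<forall>v\<in>words b q. \<forall>x\<in>J k. (u, v) \<in> Etan b \<gamma> \<psi> q x \<eta> \<eta> \<longrightarrow> (u, v) \<in> EJ b \<gamma> \<psi> q (J k))"
    by (rule eventually_conj)
  from eventually_happens'[OF trivial_limit_at_right_real this] obtain \<eta> :: real where "\<eta> > 0"
    and "\<forall>k\<in>K. \<forall>u\<in>words b q. \<forall>v\<in>words b q.
      \<forall>x\<in>J k. (u, v) \<in> Etan b \<gamma> \<psi> q x \<eta> \<eta> \<longrightarrow> (u, v) \<in> EJ b \<gamma> \<psi> q (J k)"
    by blast
  then show ?thesis
    using Etan_subset_words by (intro that) blast+
qed

lemma card_EJ_row_le_eJ:
  "k \<in> words b q \<Longrightarrow> card {l. (k, l) \<in> EJ b \<gamma> \<psi> q J} \<le> eJ b \<gamma> \<psi> q J"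
  unfolding eJ_def by (rule Max_ge) (auto intro: finite_words)

lemma eJ_mono:
  assumes "J \<subseteq> J'" "b > 0"
  shows "eJ b \<gamma> \<psi> q J \<le> eJ b \<gamma> \<psi> q J'"
proof -
  have "card {l. (k, l) \<in> EJ b \<gamma> \<psi> q J} \<le> eJ b \<gamma> \<psi> q J'" if "k \<in> words b q" for k
  proof -
    have "finite {l. (k, l) \<in> EJ b \<gamma> \<psi> q J'}"
      by (rule finite_subset[OF _ finite_words]) (use EJ_subset_words in blast)
    then have "card {l. (k, l) \<in> EJ b \<gamma> \<psi> q J} \<le> card {l. (k, l) \<in> EJ b \<gamma> \<psi> q J'}"
      using EJ_mono[OF assms(1)] by (intro card_mono) blast+
    also have "\<dots> \<le> eJ b \<gamma> \<psi> q J'" by (rule card_EJ_row_le_eJ[OF that])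
    finally show ?thesis .
  qed
  then show ?thesis
    unfolding eJ_def[of b \<gamma> \<psi> q J] using finite_words words_nonempty[OF assms(2)]
    by (subst Max_le_iff) auto
qed

lemma sum_indicator_EJ_le_eJ:
  assumes "u \<in> words b q"
  shows "(\<Sum>v\<in>words b q. if (u, v) \<in> EJ b \<gamma> \<psi> q J then 1 else 0) \<le> real (eJ b \<gamma> \<psi> q J)"
proof -
  have "{v \<in> words b q. (u, v) \<in> EJ b \<gamma> \<psi> q J} = {l. (u, l) \<in> EJ b \<gamma> \<psi> q J}"
    using EJ_subset_words by blast
  then have "(\<Sum>v\<in>words b q. if (u, v) \<in> EJ b \<gamma> \<psi> q J then 1 else 0)
      = real (card {l. (u, l) \<in> EJ b \<gamma> \<psi> q J})"
    by (simp add: sum.inter_filter[OF finite_words, symmetric])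
  also have "\<dots> \<le> real (eJ b \<gamma> \<psi> q J)"
    using card_EJ_row_le_eJ[OF assms] by simp
  finally show ?thesis .
qed

definition cell :: "nat \<Rightarrow> nat \<Rightarrow> nat \<Rightarrow> real set" where
  "cell b p k = {real k / real b ^ p .. (real k + 1) / real b ^ p}"

definition cell_index :: "nat \<Rightarrow> nat \<Rightarrow> real \<Rightarrow> nat" where
  "cell_index b p x = nat \<lfloor>x * real b ^ p\<rfloor>"

definition max_cell_eJ :: "nat \<Rightarrow> real \<Rightarrow> (real \<Rightarrow> real) \<Rightarrow> nat \<Rightarrow> nat \<Rightarrow> nat" where
  "max_cell_eJ b \<gamma> \<psi> q p = Max ((\<lambda>k. eJ b \<gamma> \<psi> q (cell b p k)) ` {..<b ^ p})"

lemma cell_Suc_subset: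
  assumes "b > 0"
  shows "cell b (Suc p) k \<subseteq> cell b p (k div b)"
proof -
  define j r where "j = k div b" and "r = k mod b"
  have k: "k = j * b + r" and r: "r < b"
    using assms by (auto simp: j_def r_def)
  have "real j / real b ^ p = real j * real b / real b ^ Suc p"
    and "(real j + 1) / real b ^ p = (real j * real b + real b) / real b ^ Suc p"
    using assms by (simp_all add: field_simps)
  moreover have "real j * real b \<le> real k" "real k + 1 \<le> real j * real b + real b"
    using k r by simp_all
  ultimately show ?thesis
    unfolding cell_def j_def[symmetric]
    by (auto intro: order_trans divide_right_mono simp del: power_Suc)
qed

lemma max_cell_eJ_Suc_le:
  assumes "b > 0"
  shows "max_cell_eJ b \<gamma> \<psi> q (Suc p) \<le> max_cell_eJ b \<gamma> \<psi> q p"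
proof -
  have "eJ b \<gamma> \<psi> q (cell b (Suc p) k) \<le> max_cell_eJ b \<gamma> \<psi> q p" if "k < b ^ Suc p" for k
  proof -
    have "k div b < b ^ p"
      using that assms by (simp add: div_less_iff_less_mult mult.commute)
    have "eJ b \<gamma> \<psi> q (cell b (Suc p) k) \<le> eJ b \<gamma> \<psi> q (cell b p (k div b))"
      by (rule eJ_mono[OF cell_Suc_subset assms]) (rule assms)
    also have "\<dots> \<le> max_cell_eJ b \<gamma> \<psi> q p"
      unfolding max_cell_eJ_def using \<open>k div b < b ^ p\<close> by (intro Max_ge) auto
    finally show ?thesis .
  qed
  then show ?thesis
    unfolding max_cell_eJ_def[of _ _ _ _ "Suc p"] using assms
    by (subst Max_le_iff) (auto simp: lessThan_empty_iff)
qed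

lemma cell_index_mem:
  assumes "b > 0" "x \<in> {0..<1}"
  shows "cell_index b p x < b ^ p" "x \<in> cell b p (cell_index b p x)"
proof -
  define c where "c = real b ^ p"
  have c: "c > 0" using assms by (simp add: c_def)
  have "0 \<le> x" "x < 1" using assms by auto
  then have nonneg: "0 \<le> \<lfloor>x * c\<rfloor>" and "x * c < c" using c by simp_all
  then have "\<lfloor>x * c\<rfloor> < int (b ^ p)"
    unfolding c_def by (metis floor_less_iff of_int_of_nat_eq of_nat_power)
  then show "cell_index b p x < b ^ p"
    using nonneg by (simp add: cell_index_def c_def[symmetric] nat_less_iff)
  have "of_int \<lfloor>x * c\<rfloor> \<le> x * c" "x * c < of_int \<lfloor>x * c\<rfloor> + 1" by linarith+
  then show "x \<in> cell b p (cell_index b p x)"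
    using c nonneg
    by (simp add: cell_def cell_index_def c_def[symmetric] pos_divide_le_eq pos_le_divide_eq)
qed

lemma measurable_cell_index_comp:
  "(\<lambda>x. f (cell_index b p x)) \<in> borel_measurable (restrict_space lborel {0..<1})"
proof (rule measurable_restrict_space1)
  have "(\<lambda>x::real. \<lfloor>x * real b ^ p\<rfloor>) \<in> borel \<rightarrow>\<^sub>M count_space UNIV"
    by (rule measurable_compose[OF _ measurable_real_floor]) simp
  then have "(\<lambda>x::real. \<lfloor>x * real b ^ p\<rfloor>) \<in> lborel \<rightarrow>\<^sub>M count_space UNIV" by simp
  then show "(\<lambda>x. f (cell_index b p x)) \<in> borel_measurable lborel"
    unfolding cell_index_def by (rule measurable_compose) simp
qed

definition cell_indicator ::
    "nat \<Rightarrow> real \<Rightarrow> (real \<Rightarrow> real) \<Rightarrow> nat \<Rightarrow> nat \<Rightarrow> real \<Rightarrow> nat list \<Rightarrow> nat list \<Rightarrow> real" where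
  "cell_indicator b \<gamma> \<psi> q p x u v =
     (if (u, v) \<in> EJ b \<gamma> \<psi> q (cell b p (cell_index b p x)) then 1 else 0)"

lemma admissible_cell_indicator:
  assumes b: "b > 0"
  shows "admissible b \<gamma> \<psi> q (cell_indicator b \<gamma> \<psi> q p)"
proof -
  obtain \<eta> :: real where "\<eta> > 0" and \<eta>:
    "\<And>k x u v. k \<in> {..<b ^ p} \<Longrightarrow> x \<in> cell b p k \<Longrightarrow> (u, v) \<in> Etan b \<gamma> \<psi> q x \<eta> \<eta>
       \<Longrightarrow> (u, v) \<in> EJ b \<gamma> \<psi> q (cell b p k)"
    using uniform_Etan_imp_EJ[OF finite_lessThan[of "b ^ p"],
        where b = b and \<gamma> = \<gamma> and \<psi> = \<psi> and q = q and J = "cell b p"]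
    by metis
  have "1 \<le> cell_indicator b \<gamma> \<psi> q p x u v * cell_indicator b \<gamma> \<psi> q p x v u"
    if "x \<in> {0..<1}" "(u, v) \<in> Etan b \<gamma> \<psi> q x \<eta> \<eta>" for x u v
  proof -
    have "cell_index b p x \<in> {..<b ^ p}" "x \<in> cell b p (cell_index b p x)"
      using cell_index_mem[OF b that(1)] by simp_all
    with \<eta> that(2) Etan_sym[OF that(2)] show ?thesis
      by (simp add: cell_indicator_def)
  qed
  moreover have "(\<lambda>x. cell_indicator b \<gamma> \<psi> q p x u v) \<in> borel_measurable (restrict_space lborel {0..<1})"
    for u v
    unfolding cell_indicator_def by (rule measurable_cell_index_comp)
  moreover have "0 \<le> cell_indicator b \<gamma> \<psi> q p x u v" for x u v
    by (simp add: cell_indicator_def)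
  ultimately show ?thesis
    unfolding admissible_def using \<open>\<eta> > 0\<close> by blast
qed

lemma measurable_SigmaVw_cell_indicator:
  "(\<lambda>x. SigmaVw b q (cell_indicator b \<gamma> \<psi> q p) (\<lambda>_. 1) x)
     \<in> borel_measurable (restrict_space lborel {0..<1})"
  unfolding SigmaVw_def cell_indicator_def by simp (rule measurable_cell_index_comp)

lemma SigmaVw_cell_indicator_le:
  assumes b: "b > 0" and x: "x \<in> {0..<1}"
  shows "SigmaVw b q (cell_indicator b \<gamma> \<psi> q p) (\<lambda>_. 1) x \<le> real (max_cell_eJ b \<gamma> \<psi> q p)"
proof -
  define k where "k = cell_index b p x"
  have "real (eJ b \<gamma> \<psi> q (cell b p k)) \<le> real (max_cell_eJ b \<gamma> \<psi> q p)"
    unfolding max_cell_eJ_def k_def using cell_index_mem(1)[OF b x] by (simp add: Max_ge)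
  then have "(\<Sum>v\<in>words b q. cell_indicator b \<gamma> \<psi> q p x u v) \<le> real (max_cell_eJ b \<gamma> \<psi> q p)"
    if "u \<in> words b q" for u
    using sum_indicator_EJ_le_eJ[OF that, of \<gamma> \<psi> "cell b p k"]
    unfolding cell_indicator_def k_def by linarith
  then show ?thesis
    unfolding SigmaVw_def using finite_words words_nonempty[OF b] by (subst Max_le_iff) auto
qed

lemma sigma_le_max_cell_eJ:
  assumes b: "b > 0"
  shows "sigma b \<gamma> \<psi> q \<le> ereal (real (max_cell_eJ b \<gamma> \<psi> q p))"
proof -
  let ?V = "cell_indicator b \<gamma> \<psi> q p"
  have "weight (\<lambda>_. 1)"
    unfolding weight_def by auto
  then have "sigma b \<gamma> \<psi> q \<le> esssup (restrict_space lborel {0..<1}) (\<lambda>x. ereal (SigmaVw b q ?V (\<lambda>_. 1) x))"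
    unfolding sigma_def using admissible_cell_indicator[OF b]
    by (intro INF_lower2[of "(\<lambda>_. 1, ?V)"]) auto
  also have "\<dots> \<le> ereal (real (max_cell_eJ b \<gamma> \<psi> q p))"
    using measurable_SigmaVw_cell_indicator SigmaVw_cell_indicator_le[OF b]
    by (intro esssup_I borel_measurable_ereal AE_I2) (auto simp: space_restrict_space)
  finally show ?thesis .
qed

theorem lemma2p3:
  fixes b :: nat and \<gamma> :: real and \<psi> :: "real \<Rightarrow> real" and q :: nat
  assumes "b \<ge> 2"
    and "1 / real b < \<gamma>" and "\<gamma> < 1"
    and "\<And>x. \<psi> (x + 1) = \<psi> x"
    and "\<psi> C1_differentiable_on UNIV"
    and "q \<ge> 1"
  shows "sigma b \<gamma> \<psi> q \<le> ereal (e_num b \<gamma> \<psi> q)"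
proof -
  have b: "b > 0" using assms(1) by simp
  define f where "f p = real (max_cell_eJ b \<gamma> \<psi> q p)" for p
  have "decseq f"
    unfolding f_def by (rule decseq_SucI) (simp add: max_cell_eJ_Suc_le[OF b])
  then obtain L where L: "f \<longlonglongrightarrow> L"
    using decseq_convergent[of f 0] unfolding f_def by auto
  have "e_num b \<gamma> \<psi> q = lim f"
    unfolding e_num_def f_def max_cell_eJ_def cell_def by simp
  also have "lim f = L"
    using L by (rule limI)
  finally have "e_num b \<gamma> \<psi> q = L" .
  have "(\<lambda>p. ereal (f p)) \<longlonglongrightarrow> ereal L"
    using L by simp
  moreover have "\<forall>p. sigma b \<gamma> \<psi> q \<le> ereal (f p)"
    unfolding f_def using sigma_le_max_cell_eJ[OF b] by blast
  ultimately have "sigma b \<gamma> \<psi> q \<le> ereal L"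
    by (intro LIMSEQ_le_const) blast+
  with \<open>e_num b \<gamma> \<psi> q = L\<close> show ?thesis by simp
qed

end
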